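(* For every set of reals $X$, the following are equivalent: (a) $X$ satisfies $\mathrm{Split}(\mathrm T,\mathrm T)$; (b) $X$ satisfies $\mathrm{Split}(\mathrm T,\Omega)$; (c) $X$ satisfies $\mathrm{Split}(\mathrm T,\Lambda)$.
   Context: A set of reals is an infinite topological space homeomorphic to a subset of $\mathbb R$. A cover of a space $X$ is a family $\mathcal U$ of subsets of $X$ with $\bigcup\mathcal U=X$ such that $X\not\subseteq U$ for every $U\in\mathcal U$. A cover $\mathcal U$ is: a large cover if every $x\in X$ lies in infinitely many members of $\mathcal U$; an $\omega$-cover if every finite subset of $X$ is contained in some member of $\mathcal U$; a $\tau$-cover if it is a large cover and for all $x,y\in X$ at least one of $\{U\in\mathcal U: x\in U, y\notin U\}$, $\{U\in\mathcal U: y\in U, x\notin U\}$ is finite. $\Lambda,\Omega,\mathrm T$ denote the collections of open large covers, open $\omega$-covers and open $\tau$-covers of $X$. For collections $\mathfrak U,\mathfrak V$ of covers of $X$, $X$ satisfies $\mathrm{Split}(\mathfrak U,\mathfrak V)$ if every $\mathcal U\in\mathfrak U$ can be partitioned into two disjoint subfamilies $\mathcal V,\mathcal W$ each of which contains a subfamily belonging to $\mathfrak V$. *)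

theory Defs
  imports "HOL-Analysis.Analysis"
begin

definition set_of_reals :: "'a topology \<Rightarrow> bool" where
  "set_of_reals X \<longleftrightarrow> infinite (topspace X) \<and>
     (\<exists>S :: real set. X homeomorphic_space (subtopology euclidean S))"

definition is_cover :: "'a topology \<Rightarrow> 'a set set \<Rightarrow> bool" where
  "is_cover X \<U> \<longleftrightarrow> (\<forall>U\<in>\<U>. U \<subseteq> topspace X) \<and> \<Union>\<U> = topspace X \<and>
     (\<forall>U\<in>\<U>. \<not> topspace X \<subseteq> U)"

definition open_covers :: "'a topology \<Rightarrow> 'a set set set" where
  "open_covers X = {\<U>. is_cover X \<U> \<and> (\<forall>U\<in>\<U>. openin X U)}"

definition large_covers :: "'a topology \<Rightarrow> 'a set set set" where
  "large_covers X = {\<U> \<in> open_covers X. \<forall>x\<in>topspace X. infinite {U\<in>\<U>. x \<in> U}}"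

definition omega_covers :: "'a topology \<Rightarrow> 'a set set set" where
  "omega_covers X = {\<U> \<in> open_covers X.
     \<forall>F. finite F \<and> F \<subseteq> topspace X \<longrightarrow> (\<exists>U\<in>\<U>. F \<subseteq> U)}"

definition tau_covers :: "'a topology \<Rightarrow> 'a set set set" where
  "tau_covers X = {\<U> \<in> large_covers X.
     \<forall>x\<in>topspace X. \<forall>y\<in>topspace X.
        finite {U\<in>\<U>. x \<in> U \<and> y \<notin> U} \<or> finite {U\<in>\<U>. y \<in> U \<and> x \<notin> U}}"

definition Split :: "'a set set set \<Rightarrow> 'a set set set \<Rightarrow> bool" where
  "Split \<AA> \<BB> \<longleftrightarrow> (\<forall>\<U>\<in>\<AA>. \<exists>\<V> \<W>. \<V> \<inter> \<W> = {} \<and> \<V> \<union> \<W> = \<U> \<and>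
      (\<exists>\<V>'\<subseteq>\<V>. \<V>' \<in> \<BB>) \<and> (\<exists>\<W>'\<subseteq>\<W>. \<W>' \<in> \<BB>))"

end

theory Submission
  imports Defs
begin

text \<open>A \<open>\<tau>\<close>-cover is an \<open>\<omega>\<close>-cover: for a finite set \<open>F\<close> the relation
  ``only finitely many members contain \<open>x\<close> but miss \<open>y\<close>'' is a total preorder on \<open>F\<close>, so \<open>F\<close>
  has a least point \<open>x\<close>; of the infinitely many members containing \<open>x\<close>, all but finitely many
  contain every point of \<open>F\<close>. Since \<open>\<omega>\<close>-covers are large covers, \<open>Split(T,T)\<close> implies
  \<open>Split(T,\<Omega>)\<close>, which implies \<open>Split(T,\<Lambda>)\<close>. Conversely, the \<open>\<tau>\<close>-property passes to
  subfamilies, so a large subfamily of a \<open>\<tau>\<close>-cover is again a \<open>\<tau>\<close>-cover.\<close>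

lemma Split_weaken:
  assumes "Split \<AA> \<BB>"
    and "\<And>\<U> \<V>. \<U> \<in> \<AA> \<Longrightarrow> \<V> \<subseteq> \<U> \<Longrightarrow> \<V> \<in> \<BB> \<Longrightarrow> \<V> \<in> \<CC>"
  shows "Split \<AA> \<CC>"
  unfolding Split_def
proof
  fix \<U> assume \<U>: "\<U> \<in> \<AA>"
  then obtain \<V> \<W> \<V>' \<W>' where part: "\<V> \<inter> \<W> = {}" "\<V> \<union> \<W> = \<U>"
    and "\<V>' \<subseteq> \<V>" "\<V>' \<in> \<BB>" "\<W>' \<subseteq> \<W>" "\<W>' \<in> \<BB>"
    using assms(1) unfolding Split_def by meson
  moreover have "\<V>' \<in> \<CC>" "\<W>' \<in> \<CC>"
    using assms(2)[OF \<U>] part calculation by blast+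
  ultimately show "\<exists>\<V> \<W>. \<V> \<inter> \<W> = {} \<and> \<V> \<union> \<W> = \<U> \<and>
      (\<exists>\<V>'\<subseteq>\<V>. \<V>' \<in> \<CC>) \<and> (\<exists>\<W>'\<subseteq>\<W>. \<W>' \<in> \<CC>)"
    by (intro exI[of _ \<V>] exI[of _ \<W>] conjI exI[of _ \<V>'] exI[of _ \<W>']) simp_all
qed

corollary Split_mono: "\<BB> \<subseteq> \<CC> \<Longrightarrow> Split \<AA> \<BB> \<Longrightarrow> Split \<AA> \<CC>"
  by (erule Split_weaken) blast

lemma tau_covers_large_subfamily:
  assumes "\<U> \<in> tau_covers X" "\<V> \<subseteq> \<U>" "\<V> \<in> large_covers X"
  shows "\<V> \<in> tau_covers X"
proof -
  have "finite {U\<in>\<V>. x \<in> U \<and> y \<notin> U}" if "finite {U\<in>\<U>. x \<in> U \<and> y \<notin> U}" for x y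
    using that by (rule finite_subset[rotated]) (use assms(2) in blast)
  then show ?thesis
    using assms(1,3) unfolding tau_covers_def by blast
qed

lemma finite_set_has_tau_least:
  assumes tau: "\<And>x y. x \<in> S \<Longrightarrow> y \<in> S \<Longrightarrow>
      finite {U\<in>\<U>. x \<in> U \<and> y \<notin> U} \<or> finite {U\<in>\<U>. y \<in> U \<and> x \<notin> U}"
    and "finite F" "F \<noteq> {}" "F \<subseteq> S"
  shows "\<exists>x\<in>F. \<forall>y\<in>F. finite {U\<in>\<U>. x \<in> U \<and> y \<notin> U}"
  using assms(2-4)
proof (induction F rule: finite_ne_induct)
  case (singleton x)
  then show ?case by simp
next
  case (insert a F)
  then obtain x where "x \<in> F" and x_least: "\<forall>y\<in>F. finite {U\<in>\<U>. x \<in> U \<and> y \<notin> U}"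
    by auto
  show ?case
  proof (cases "finite {U\<in>\<U>. x \<in> U \<and> a \<notin> U}")
    case True
    with \<open>x \<in> F\<close> x_least show ?thesis by auto
  next
    case False
    with tau \<open>x \<in> F\<close> insert.prems have a_below_x: "finite {U\<in>\<U>. a \<in> U \<and> x \<notin> U}"
      by blast
    have "finite {U\<in>\<U>. a \<in> U \<and> y \<notin> U}" if "y \<in> F" for y
    proof (rule finite_subset)
      show "{U\<in>\<U>. a \<in> U \<and> y \<notin> U} \<subseteq> {U\<in>\<U>. a \<in> U \<and> x \<notin> U} \<union> {U\<in>\<U>. x \<in> U \<and> y \<notin> U}"
        by blast
      show "finite ({U\<in>\<U>. a \<in> U \<and> x \<notin> U} \<union> {U\<in>\<U>. x \<in> U \<and> y \<notin> U})"
        using a_below_x x_least that by blast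
    qed
    then show ?thesis by auto
  qed
qed

lemma tau_covers_subset_omega_covers:
  assumes "topspace X \<noteq> {}"
  shows "tau_covers X \<subseteq> omega_covers X"
proof
  fix \<U> assume \<U>: "\<U> \<in> tau_covers X"
  have large: "infinite {U\<in>\<U>. x \<in> U}" if "x \<in> topspace X" for x
    using \<U> that unfolding tau_covers_def large_covers_def by blast
  have "\<exists>U\<in>\<U>. F \<subseteq> U" if F: "finite F" "F \<subseteq> topspace X" for F
  proof (cases "F = {}")
    case True
    obtain x where "x \<in> topspace X" using assms by blast
    then obtain U where "U \<in> \<U>" using large by fastforce
    then show ?thesis using True by auto
  next
    case False
    then obtain x where "x \<in> F" and x_least: "\<forall>y\<in>F. finite {U\<in>\<U>. x \<in> U \<and> y \<notin> U}"
      using finite_set_has_tau_least[of "topspace X" \<U> F] \<U> F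
      unfolding tau_covers_def by blast
    have "finite (\<Union>y\<in>F. {U\<in>\<U>. x \<in> U \<and> y \<notin> U})"
      using F(1) x_least by blast
    moreover have "infinite {U\<in>\<U>. x \<in> U}"
      using large \<open>x \<in> F\<close> F(2) by blast
    ultimately have "\<not> {U\<in>\<U>. x \<in> U} \<subseteq> (\<Union>y\<in>F. {U\<in>\<U>. x \<in> U \<and> y \<notin> U})"
      using finite_subset by blast
    then show ?thesis by blast
  qed
  with \<U> show "\<U> \<in> omega_covers X"
    unfolding omega_covers_def tau_covers_def large_covers_def by blast
qed

lemma omega_covers_subset_large_covers: "omega_covers X \<subseteq> large_covers X"
proof
  fix \<U> assume \<U>: "\<U> \<in> omega_covers X"
  have "\<forall>U\<in>\<U>. \<exists>y. y \<in> topspace X \<and> y \<notin> U"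
    using \<U> unfolding omega_covers_def open_covers_def is_cover_def by auto
  then obtain miss where miss: "\<forall>U\<in>\<U>. miss U \<in> topspace X \<and> miss U \<notin> U"
    by metis
  have "infinite {U\<in>\<U>. x \<in> U}" if x: "x \<in> topspace X" for x
  proof
    assume "finite {U\<in>\<U>. x \<in> U}"
    then have "finite (insert x (miss ` {U\<in>\<U>. x \<in> U}))" by simp
    moreover have "insert x (miss ` {U\<in>\<U>. x \<in> U}) \<subseteq> topspace X" using miss x by auto
    ultimately obtain U where "U \<in> \<U>" "insert x (miss ` {U\<in>\<U>. x \<in> U}) \<subseteq> U"
      using \<U> unfolding omega_covers_def by blast
    then show False using miss by auto
  qed
  with \<U> show "\<U> \<in> large_covers X"
    unfolding omega_covers_def large_covers_def by blast
qed

theorem theorem2p1: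
  fixes X :: "'a topology"
  assumes "set_of_reals X"
  shows "(Split (tau_covers X) (tau_covers X) \<longleftrightarrow> Split (tau_covers X) (omega_covers X))
       \<and> (Split (tau_covers X) (omega_covers X) \<longleftrightarrow> Split (tau_covers X) (large_covers X))"
proof -
  have "topspace X \<noteq> {}" using assms unfolding set_of_reals_def by auto
  then have a_b: "Split (tau_covers X) (tau_covers X) \<Longrightarrow> Split (tau_covers X) (omega_covers X)"
    by (rule Split_mono[OF tau_covers_subset_omega_covers])
  have b_c: "Split (tau_covers X) (omega_covers X) \<Longrightarrow> Split (tau_covers X) (large_covers X)"
    by (rule Split_mono[OF omega_covers_subset_large_covers])
  have c_a: "Split (tau_covers X) (large_covers X) \<Longrightarrow> Split (tau_covers X) (tau_covers X)"
    by (erule Split_weaken) (fact tau_covers_large_subfamily)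
  show ?thesis using a_b b_c c_a by blast
qed

end
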